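(* Let $\pi>0$, $\bar d>0$, $0<\theta_1<\dots<\theta_K$, $0\le\beta_1<\dots<\beta_M\le1$, and let $A:[0,D]\to[0,\bar d]$ be continuously differentiable and decreasing. Let $\sigma(Q,\beta,\theta)=-[\theta\beta+\pi(1-\beta)]A'(Q)$ and enumerate the $KM$ types as $\Lambda_1,\dots,\Lambda_{KM}$ with $\sigma(Q,\Lambda_1)\le\dots\le\sigma(Q,\Lambda_{KM})$ for all $Q$. Let $L(Q,\beta,\theta)=\theta[\bar d-\beta A(Q)]-\pi(1-\beta)A(Q)$ and $\bar S(Q,\Pi,\Lambda)=L(Q,\Lambda)-\Pi$. Say items $\phi_i=(Q_i,\Pi_i)$ and $\phi_j=(Q_j,\Pi_j)$ are pairwise incentive compatible if $\bar S(Q_i,\Pi_i,\Lambda_i)\ge\bar S(Q_j,\Pi_j,\Lambda_i)$ and $\bar S(Q_j,\Pi_j,\Lambda_j)\ge\bar S(Q_i,\Pi_i,\Lambda_j)$. Let $\{(Q_i,\Pi_i)\}_{i=1}^{KM}$ with $Q_i\in[0,D]$ satisfy $Q_1\le\dots\le Q_{KM}$ and $\Pi_1\le\dots\le\Pi_{KM}$. Then for any $i_1<i_2<i_3$: if $\phi_{i_1},\phi_{i_2}$ are pairwise incentive compatible and $\phi_{i_2},\phi_{i_3}$ are pairwise incentive compatible, then $\phi_{i_1},\phi_{i_3}$ are pairwise incentive compatible.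
   Context: Model: an operator offers one contract item (data cap $Q_i$, fee $\Pi_i$) for each user type $\Lambda_i=(\beta,\theta)$ (network substitutability $\beta$, data valuation $\theta$). $\pi$ is the overage price, $\bar d$ the mean demand, $A(Q)$ the expected overage consumption under cap $Q$ (decreasing, convex). $\sigma$ is the willingness-to-pay, by which types are sorted (the ordering does not depend on $Q$). *)

theory Defs
  imports "HOL-Analysis.Analysis"
begin

text \<open>A user type is a pair (beta, theta): network substitutability and data valuation.
  pio is the overage price, dbar the mean demand, A the expected overage consumption.\<close>

definition sigma :: "real \<Rightarrow> (real \<Rightarrow> real) \<Rightarrow> real \<Rightarrow> real \<times> real \<Rightarrow> real" where
  "sigma pio A' Q \<Lambda> = - ((snd \<Lambda> * fst \<Lambda> + pio * (1 - fst \<Lambda>)) * A' Q)"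

definition Lfun :: "real \<Rightarrow> real \<Rightarrow> (real \<Rightarrow> real) \<Rightarrow> real \<Rightarrow> real \<times> real \<Rightarrow> real" where
  "Lfun pio dbar A Q \<Lambda> = snd \<Lambda> * (dbar - fst \<Lambda> * A Q) - pio * (1 - fst \<Lambda>) * A Q"

definition Sbar :: "real \<Rightarrow> real \<Rightarrow> (real \<Rightarrow> real) \<Rightarrow> real \<Rightarrow> real \<Rightarrow> real \<times> real \<Rightarrow> real" where
  "Sbar pio dbar A Q fee \<Lambda> = Lfun pio dbar A Q \<Lambda> - fee"

definition pairwise_IC :: "real \<Rightarrow> real \<Rightarrow> (real \<Rightarrow> real) \<Rightarrow> (nat \<Rightarrow> real \<times> real)
    \<Rightarrow> (nat \<Rightarrow> real) \<Rightarrow> (nat \<Rightarrow> real) \<Rightarrow> nat \<Rightarrow> nat \<Rightarrow> bool" where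
  "pairwise_IC pio dbar A lam Q P i j \<longleftrightarrow>
     Sbar pio dbar A (Q i) (P i) (lam i) \<ge> Sbar pio dbar A (Q j) (P j) (lam i) \<and>
     Sbar pio dbar A (Q j) (P j) (lam j) \<ge> Sbar pio dbar A (Q i) (P i) (lam j)"

end

theory Submission
  imports Defs
begin

text \<open>Up to a term that does not depend on the item, the surplus of type \<open>\<Lambda>\<close> from item
  \<open>(Q, \<Pi>)\<close> is \<open>-c(\<Lambda>) A(Q) - \<Pi>\<close> with \<open>c(\<Lambda>) = \<theta>\<beta> + \<pi>(1 - \<beta>)\<close>, and \<open>\<sigma> = -c A'\<close>.
  Pairwise incentive compatibility of \<open>\<phi>\<^sub>i, \<phi>\<^sub>j\<close> thus says that the fee difference
  \<open>\<Pi>\<^sub>j - \<Pi>\<^sub>i\<close> lies between \<open>c(\<Lambda>\<^sub>i)\<close> and \<open>c(\<Lambda>\<^sub>j)\<close> times \<open>A(Q\<^sub>i) - A(Q\<^sub>j)\<close>.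
  If \<open>A(Q\<^sub>1) = A(Q\<^sub>3)\<close>, all three overages coincide and the bounds are trivial. Otherwise the
  mean value theorem gives a point of \<open>[Q\<^sub>1, Q\<^sub>3]\<close> where \<open>A' < 0\<close>; there the sorting by \<open>\<sigma>\<close>
  orders the coefficients \<open>c(\<Lambda>\<^sub>1) \<le> c(\<Lambda>\<^sub>2) \<le> c(\<Lambda>\<^sub>3)\<close>, and adding the two pairs of bounds
  gives the bounds for \<open>\<phi>\<^sub>1, \<phi>\<^sub>3\<close>.\<close>

definition overage_coeff :: "real \<Rightarrow> real \<times> real \<Rightarrow> real" where
  "overage_coeff pio \<Lambda> = snd \<Lambda> * fst \<Lambda> + pio * (1 - fst \<Lambda>)"

lemma sigma_eq_overage_coeff: "sigma pio A' q \<Lambda> = - (overage_coeff pio \<Lambda> * A' q)"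
  unfolding sigma_def overage_coeff_def by simp

lemma Sbar_eq_overage_coeff:
  "Sbar pio dbar A q fee \<Lambda> = snd \<Lambda> * dbar - overage_coeff pio \<Lambda> * A q - fee"
  unfolding Sbar_def Lfun_def overage_coeff_def by (simp add: algebra_simps)

lemma pairwise_IC_iff_fee_bounds:
  "pairwise_IC pio dbar A lam Q P i j \<longleftrightarrow>
     overage_coeff pio (lam i) * (A (Q i) - A (Q j)) \<le> P j - P i \<and>
     P j - P i \<le> overage_coeff pio (lam j) * (A (Q i) - A (Q j))"
  unfolding pairwise_IC_def Sbar_eq_overage_coeff by (auto simp: algebra_simps)

lemma overage_coeff_le_if_sigma_le:
  assumes "A' q < 0" and "sigma pio A' q \<Lambda> \<le> sigma pio A' q \<Lambda>'"
  shows "overage_coeff pio \<Lambda> \<le> overage_coeff pio \<Lambda>'"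
  using assms unfolding sigma_eq_overage_coeff by (simp add: mult_le_cancel_right)

lemma fee_bounds_trans:
  fixes c1 c2 c3 a1 a2 a3 p1 p2 p3 :: real
  assumes "c1 \<le> c2" "c2 \<le> c3" "a2 \<le> a1" "a3 \<le> a2"
    and "c1 * (a1 - a2) \<le> p2 - p1" "p2 - p1 \<le> c2 * (a1 - a2)"
    and "c2 * (a2 - a3) \<le> p3 - p2" "p3 - p2 \<le> c3 * (a2 - a3)"
  shows "c1 * (a1 - a3) \<le> p3 - p1 \<and> p3 - p1 \<le> c3 * (a1 - a3)"
proof -
  have "c1 * (a2 - a3) \<le> c2 * (a2 - a3)" "c2 * (a1 - a2) \<le> c3 * (a1 - a2)"
    using assms(1-4) by (simp_all add: mult_right_mono)
  with assms(5-8) show ?thesis by (simp add: algebra_simps)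
qed

lemma deriv_neg_if_strict_decrease:
  fixes f f' :: "real \<Rightarrow> real"
  assumes deriv: "\<forall>x\<in>{a..b}. (f has_real_derivative f' x) (at x within {a..b})"
    and "a \<le> b" and decr: "f b < f a"
  shows "\<exists>z\<in>{a..b}. f' z < 0"
proof -
  have "a < b" using \<open>a \<le> b\<close> decr by (cases "a = b") auto
  moreover have "\<forall>x\<in>{a..b}. (f has_derivative (\<lambda>h. f' x * h)) (at x within {a..b})"
    using deriv by (simp add: has_field_derivative_def)
  ultimately obtain z where z: "z \<in> {a..b}" "f b - f a = f' z * (b - a)"
    using mvt_very_simple[of a b f "\<lambda>x h. f' x * h"] by auto
  with decr have "f' z * (b - a) < 0" by simp
  with \<open>a < b\<close> have "f' z < 0" by (simp add: mult_less_0_iff)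
  with z(1) show ?thesis by blast
qed

theorem lemma5:
  fixes pio dbar D :: real and A A' :: "real \<Rightarrow> real" and K M :: nat
    and theta beta :: "nat \<Rightarrow> real" and lam :: "nat \<Rightarrow> real \<times> real"
    and Q P :: "nat \<Rightarrow> real" and i1 i2 i3 :: nat
  assumes pio: "pio > 0" and dbar: "dbar > 0"
    and theta_pos: "0 < theta 1"
    and theta_mono: "\<forall>k. 1 \<le> k \<and> k < K \<longrightarrow> theta k < theta (Suc k)"
    and beta_lo: "0 \<le> beta 1" and beta_hi: "beta M \<le> 1"
    and beta_mono: "\<forall>m. 1 \<le> m \<and> m < M \<longrightarrow> beta m < beta (Suc m)"
    and A_deriv: "\<forall>x\<in>{0..D}. (A has_real_derivative A' x) (at x within {0..D})"
    and A'_cont: "continuous_on {0..D} A'"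
    and A_decr: "\<forall>x\<in>{0..D}. \<forall>y\<in>{0..D}. x \<le> y \<longrightarrow> A y \<le> A x"
    and A_range: "\<forall>x\<in>{0..D}. 0 \<le> A x \<and> A x \<le> dbar"
    and lam_enum: "bij_betw lam {1..K*M} (beta ` {1..M} \<times> theta ` {1..K})"
    and lam_sorted: "\<forall>q\<in>{0..D}. \<forall>i\<in>{1..K*M}. \<forall>j\<in>{1..K*M}.
                       i \<le> j \<longrightarrow> sigma pio A' q (lam i) \<le> sigma pio A' q (lam j)"
    and Q_range: "\<forall>i\<in>{1..K*M}. Q i \<in> {0..D}"
    and Q_mono: "\<forall>i\<in>{1..K*M}. \<forall>j\<in>{1..K*M}. i \<le> j \<longrightarrow> Q i \<le> Q j"
    and P_mono: "\<forall>i\<in>{1..K*M}. \<forall>j\<in>{1..K*M}. i \<le> j \<longrightarrow> P i \<le> P j"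
    and idx: "1 \<le> i1" "i1 < i2" "i2 < i3" "i3 \<le> K*M"
    and ic12: "pairwise_IC pio dbar A lam Q P i1 i2"
    and ic23: "pairwise_IC pio dbar A lam Q P i2 i3"
  shows "pairwise_IC pio dbar A lam Q P i1 i3"
proof -
  let ?c = "\<lambda>i. overage_coeff pio (lam i)"
  have idx_range: "i1 \<in> {1..K*M}" "i2 \<in> {1..K*M}" "i3 \<in> {1..K*M}" using idx by auto
  then have Q_le: "Q i1 \<le> Q i2" "Q i2 \<le> Q i3" using Q_mono idx by auto
  have QD: "{Q i1..Q i3} \<subseteq> {0..D}"
    using Q_range idx_range(1,3) by (metis atLeastAtMost_iff atLeastatMost_subset_iff)
  moreover have "Q i1 \<in> {Q i1..Q i3}" "Q i2 \<in> {Q i1..Q i3}" "Q i3 \<in> {Q i1..Q i3}"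
    using Q_le by auto
  ultimately have A_le: "A (Q i2) \<le> A (Q i1)" "A (Q i3) \<le> A (Q i2)"
    using A_decr Q_le by (meson subsetD)+
  show ?thesis
  proof (cases "A (Q i3) < A (Q i1)")
    case True
    have "\<forall>x\<in>{Q i1..Q i3}. (A has_real_derivative A' x) (at x within {Q i1..Q i3})"
      using A_deriv QD by (meson DERIV_subset subsetD)
    with True Q_le obtain z where z: "z \<in> {Q i1..Q i3}" "A' z < 0"
      using deriv_neg_if_strict_decrease by (metis order_trans)
    then have "?c i1 \<le> ?c i2" "?c i2 \<le> ?c i3"
      using lam_sorted QD idx_range idx
      by (auto intro!: overage_coeff_le_if_sigma_le[of A' z])
    then show ?thesis
      using fee_bounds_trans A_le ic12 ic23 unfolding pairwise_IC_iff_fee_bounds by blast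
  next
    case False
    with A_le have "A (Q i2) = A (Q i1)" "A (Q i3) = A (Q i1)" by auto
    then show ?thesis using ic12 ic23 unfolding pairwise_IC_iff_fee_bounds by auto
  qed
qed

end
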